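(* Let $\mathbf P=(P,\leq,{}',0,1)$ be a bounded poset which is the horizontal sum of pseudo-orthomodular posets $\mathbf P_{\alpha}=(P_{\alpha},\leq_{\alpha},{}'_{\alpha},0,1)$, $\alpha\in\Lambda$ (with $'$ acting on each summand as $'_\alpha$). Then $\mathbf P$ is a pseudo-orthomodular poset.
   Context: For $M\subseteq P$, $U(M)=\{x\in P\mid y\le x \text{ for all } y\in M\}$ and $L(M)=\{x\in P\mid x\le y\text{ for all }y\in M\}$; write $U(a,b)=U(\{a,b\})$, $L(a,b)=L(\{a,b\})$, and $LU(\cdot)=L(U(\cdot))$ etc. A poset with complementation is a bounded poset $(P,\le,{}',0,1)$ where $'$ is an antitone involution ($x\le y\Rightarrow y'\le x'$, $x''=x$) satisfying $L(x,x')=\{0\}$ and $U(x,x')=\{1\}$ for all $x$. It is pseudo-orthomodular if $L(U(L(x,y),y'),y)=L(x,y)$ for all $x,y\in P$ (equivalently $U(L(U(x,y),y'),y)=U(x,y)$). The horizontal sum of a family of bounded posets is obtained from their disjoint union by identifying all bottom elements into $0$ and all top elements into $1$; elements of different summands other than $0,1$ are incomparable. *)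

theory Defs
  imports Main
begin

definition upper :: "'a set \<Rightarrow> ('a \<Rightarrow> 'a \<Rightarrow> bool) \<Rightarrow> 'a set \<Rightarrow> 'a set" where
  "upper P le M = {x \<in> P. \<forall>y\<in>M. le y x}"

definition lower :: "'a set \<Rightarrow> ('a \<Rightarrow> 'a \<Rightarrow> bool) \<Rightarrow> 'a set \<Rightarrow> 'a set" where
  "lower P le M = {x \<in> P. \<forall>y\<in>M. le x y}"

definition poset_on :: "'a set \<Rightarrow> ('a \<Rightarrow> 'a \<Rightarrow> bool) \<Rightarrow> bool" where
  "poset_on P le \<longleftrightarrow>
     (\<forall>x\<in>P. le x x) \<and>
     (\<forall>x\<in>P. \<forall>y\<in>P. le x y \<and> le y x \<longrightarrow> x = y) \<and>
     (\<forall>x\<in>P. \<forall>y\<in>P. \<forall>w\<in>P. le x y \<and> le y w \<longrightarrow> le x w)"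

definition bounded_poset :: "'a set \<Rightarrow> ('a \<Rightarrow> 'a \<Rightarrow> bool) \<Rightarrow> 'a \<Rightarrow> 'a \<Rightarrow> bool" where
  "bounded_poset P le z t \<longleftrightarrow> poset_on P le \<and> z \<in> P \<and> t \<in> P \<and>
     (\<forall>x\<in>P. le z x \<and> le x t)"

definition poset_with_complementation ::
  "'a set \<Rightarrow> ('a \<Rightarrow> 'a \<Rightarrow> bool) \<Rightarrow> ('a \<Rightarrow> 'a) \<Rightarrow> 'a \<Rightarrow> 'a \<Rightarrow> bool" where
  "poset_with_complementation P le c z t \<longleftrightarrow> bounded_poset P le z t \<and>
     (\<forall>x\<in>P. c x \<in> P) \<and>
     (\<forall>x\<in>P. \<forall>y\<in>P. le x y \<longrightarrow> le (c y) (c x)) \<and>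
     (\<forall>x\<in>P. c (c x) = x) \<and>
     (\<forall>x\<in>P. lower P le {x, c x} = {z}) \<and>
     (\<forall>x\<in>P. upper P le {x, c x} = {t})"

definition pseudo_orthomodular ::
  "'a set \<Rightarrow> ('a \<Rightarrow> 'a \<Rightarrow> bool) \<Rightarrow> ('a \<Rightarrow> 'a) \<Rightarrow> 'a \<Rightarrow> 'a \<Rightarrow> bool" where
  "pseudo_orthomodular P le c z t \<longleftrightarrow> poset_with_complementation P le c z t \<and>
     (\<forall>x\<in>P. \<forall>y\<in>P.
        lower P le (upper P le (lower P le {x, y} \<union> {c y}) \<union> {y}) = lower P le {x, y})"

text \<open>Horizontal sum of a family (P_\<alpha>, le_\<alpha>, c_\<alpha>, z_\<alpha>, o_\<alpha>), \<alpha> \<in> \<Lambda>: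
  the common bottom is HBot, the common top is HTop, and every other element of
  summand \<alpha> is tagged with \<alpha>.\<close>
datatype ('i, 'a) hsum = HBot | HTop | HElem 'i 'a

definition hs_carrier :: "'i set \<Rightarrow> ('i \<Rightarrow> 'a set) \<Rightarrow> ('i \<Rightarrow> 'a) \<Rightarrow> ('i \<Rightarrow> 'a) \<Rightarrow> ('i, 'a) hsum set" where
  "hs_carrier \<Lambda> P z t = {HBot, HTop} \<union>
     {HElem \<alpha> x | \<alpha> x. \<alpha> \<in> \<Lambda> \<and> x \<in> P \<alpha> \<and> x \<noteq> z \<alpha> \<and> x \<noteq> t \<alpha>}"

fun hs_le :: "('i \<Rightarrow> 'a \<Rightarrow> 'a \<Rightarrow> bool) \<Rightarrow> ('i, 'a) hsum \<Rightarrow> ('i, 'a) hsum \<Rightarrow> bool" where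
  "hs_le le HBot y = True"
| "hs_le le x HTop = True"
| "hs_le le (HElem \<alpha> x) (HElem \<beta> y) = (\<alpha> = \<beta> \<and> le \<alpha> x y)"
| "hs_le le _ _ = False"

fun hs_comp :: "('i \<Rightarrow> 'a \<Rightarrow> 'a) \<Rightarrow> ('i, 'a) hsum \<Rightarrow> ('i, 'a) hsum" where
  "hs_comp c HBot = HTop"
| "hs_comp c HTop = HBot"
| "hs_comp c (HElem \<alpha> x) = HElem \<alpha> (c \<alpha> x)"

end

theory Submission
  imports Defs
begin

text \<open>Each summand embeds into the horizontal sum, its 0 and 1 going to the common 0
  and 1, and every element comparable with a proper element y of the summand lies in the
  image. Hence lower and upper cones of sets containing y are images of the cones computed
  in the summand, and the pseudo-orthomodular law at y is inherited from the summand. If x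
  lies in another summand, then L(x,y) = {0} = L(0,y); the cases y = 0 and y = 1 hold in
  every poset with complementation.\<close>

lemma upper_eq_lower_converse: "upper P le M = lower P (\<lambda>x y. le y x) M"
  unfolding upper_def lower_def by simp

lemma lower_image_order_embedding:
  assumes f_into: "f ` A \<subseteq> B"
    and f_le: "\<And>x y. x \<in> A \<Longrightarrow> y \<in> A \<Longrightarrow> s (f x) (f y) \<longleftrightarrow> r x y"
    and M: "M \<subseteq> A" "m \<in> M"
    and below_in_image: "\<And>w. w \<in> B \<Longrightarrow> s w (f m) \<Longrightarrow> w \<in> f ` A"
  shows "lower B s (f ` M) = f ` lower A r M"
proof
  show "lower B s (f ` M) \<subseteq> f ` lower A r M"
  proof
    fix w assume w: "w \<in> lower B s (f ` M)"
    then obtain x where x: "x \<in> A" "w = f x"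
      using below_in_image M(2) unfolding lower_def by blast
    then have "x \<in> lower A r M" using w f_le M(1) unfolding lower_def by auto
    then show "w \<in> f ` lower A r M" using x by blast
  qed
  show "f ` lower A r M \<subseteq> lower B s (f ` M)"
    using f_into f_le M(1) unfolding lower_def by auto
qed

lemma upper_image_order_embedding:
  assumes "f ` A \<subseteq> B"
    and "\<And>x y. x \<in> A \<Longrightarrow> y \<in> A \<Longrightarrow> s (f x) (f y) \<longleftrightarrow> r x y"
    and "M \<subseteq> A" "m \<in> M"
    and "\<And>w. w \<in> B \<Longrightarrow> s (f m) w \<Longrightarrow> w \<in> f ` A"
  shows "upper B s (f ` M) = f ` upper A r M"
  unfolding upper_eq_lower_converse
  by (rule lower_image_order_embedding) (use assms in auto)

locale bounded_poset_on =
  fixes P :: "'a set" and le :: "'a \<Rightarrow> 'a \<Rightarrow> bool" and bot top :: 'a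
  assumes bounded_poset: "bounded_poset P le bot top"
begin

lemma reflexive: "x \<in> P \<Longrightarrow> le x x"
  and antisymmetric: "x \<in> P \<Longrightarrow> y \<in> P \<Longrightarrow> le x y \<Longrightarrow> le y x \<Longrightarrow> x = y"
  and transitive: "x \<in> P \<Longrightarrow> y \<in> P \<Longrightarrow> w \<in> P \<Longrightarrow> le x y \<Longrightarrow> le y w \<Longrightarrow> le x w"
  and bot_in: "bot \<in> P" and top_in: "top \<in> P"
  and bot_le: "x \<in> P \<Longrightarrow> le bot x" and le_top: "x \<in> P \<Longrightarrow> le x top"
  using bounded_poset unfolding bounded_poset_def poset_on_def by blast+

lemma le_bot_iff: "x \<in> P \<Longrightarrow> le x bot \<longleftrightarrow> x = bot"
  using antisymmetric bot_in bot_le reflexive by blast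

lemma top_le_iff: "x \<in> P \<Longrightarrow> le top x \<longleftrightarrow> x = top"
  using antisymmetric top_in le_top reflexive by blast

lemma bot_ne_top: "x \<in> P \<Longrightarrow> x \<noteq> bot \<Longrightarrow> x \<noteq> top \<Longrightarrow> bot \<noteq> top"
  using le_bot_iff le_top by blast

end

locale poset_with_complementation_on =
  fixes P :: "'a set" and le :: "'a \<Rightarrow> 'a \<Rightarrow> bool" and c :: "'a \<Rightarrow> 'a" and bot top :: 'a
  assumes complemented: "poset_with_complementation P le c bot top"
begin

sublocale bounded_poset_on P le bot top
  using complemented unfolding poset_with_complementation_def by unfold_locales simp

lemma compl_in: "x \<in> P \<Longrightarrow> c x \<in> P"
  and compl_antitone: "x \<in> P \<Longrightarrow> y \<in> P \<Longrightarrow> le x y \<Longrightarrow> le (c y) (c x)"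
  and compl_compl: "x \<in> P \<Longrightarrow> c (c x) = x"
  and lower_compl: "x \<in> P \<Longrightarrow> lower P le {x, c x} = {bot}"
  and upper_compl: "x \<in> P \<Longrightarrow> upper P le {x, c x} = {top}"
  using complemented unfolding poset_with_complementation_def by blast+

lemma compl_bot: "c bot = top"
proof -
  have "c bot \<in> upper P le {bot, c bot}"
    using compl_in bot_in bot_le reflexive unfolding upper_def by simp
  then show ?thesis using upper_compl bot_in by blast
qed

lemma compl_top: "c top = bot"
  using compl_compl[OF bot_in] compl_bot by simp

lemma compl_proper: "x \<in> P \<Longrightarrow> x \<noteq> bot \<Longrightarrow> x \<noteq> top \<Longrightarrow> c x \<noteq> bot \<and> c x \<noteq> top"
  using compl_compl compl_bot compl_top by metis

lemma lower_insert_bot: "x \<in> P \<Longrightarrow> lower P le {x, bot} = {bot}"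
  unfolding lower_def using bot_in bot_le le_bot_iff by auto

lemma pseudo_orthomodular_law_bot:
  assumes "x \<in> P"
  shows "lower P le (upper P le (lower P le {x, bot} \<union> {c bot}) \<union> {bot}) = lower P le {x, bot}"
proof -
  have "upper P le ({bot} \<union> {c bot}) = {top}"
    using upper_compl[OF bot_in] by (simp add: insert_commute)
  then show ?thesis
    using lower_insert_bot[OF assms] lower_insert_bot[OF top_in] by (simp add: insert_commute)
qed

lemma pseudo_orthomodular_law_top:
  assumes "x \<in> P"
  shows "lower P le (upper P le (lower P le {x, top} \<union> {c top}) \<union> {top}) = lower P le {x, top}"
proof -
  have "x \<in> upper P le (lower P le {x, top} \<union> {c top})"
    using assms compl_top bot_le unfolding lower_def upper_def by auto
  moreover have "lower P le {x, top} = lower P le {x}"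
    using le_top unfolding lower_def by auto
  ultimately show ?thesis
    using assms transitive unfolding lower_def upper_def by blast
qed

end

lemma hs_le_HBot_iff [simp]: "hs_le le w HBot \<longleftrightarrow> w = HBot"
  by (cases w) simp_all

lemma hs_le_HTop [simp]: "hs_le le w HTop"
  by (cases w) simp_all

lemma HTop_hs_le_iff [simp]: "hs_le le HTop w \<longleftrightarrow> w = HTop"
  by (cases w) simp_all

lemma HBot_in_hs_carrier [simp]: "HBot \<in> hs_carrier \<Lambda> P z t"
  and HTop_in_hs_carrier [simp]: "HTop \<in> hs_carrier \<Lambda> P z t"
  unfolding hs_carrier_def by auto

lemma HElem_in_hs_carrier_iff:
  "HElem \<alpha> x \<in> hs_carrier \<Lambda> P z t \<longleftrightarrow> \<alpha> \<in> \<Lambda> \<and> x \<in> P \<alpha> \<and> x \<noteq> z \<alpha> \<and> x \<noteq> t \<alpha>"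
  unfolding hs_carrier_def by auto

lemma lower_HElem_distinct_summands:
  "\<gamma> \<noteq> \<beta> \<Longrightarrow> lower (hs_carrier \<Lambda> P z t) (hs_le le) {HElem \<gamma> a, HElem \<beta> b} = {HBot}"
  unfolding lower_def by (auto elim: hs_le.elims)

definition hs_incl :: "'i \<Rightarrow> ('i \<Rightarrow> 'a) \<Rightarrow> ('i \<Rightarrow> 'a) \<Rightarrow> 'a \<Rightarrow> ('i, 'a) hsum" where
  "hs_incl \<beta> z t x = (if x = z \<beta> then HBot else if x = t \<beta> then HTop else HElem \<beta> x)"

lemma hs_incl_proper [simp]: "x \<noteq> z \<beta> \<Longrightarrow> x \<noteq> t \<beta> \<Longrightarrow> hs_incl \<beta> z t x = HElem \<beta> x"
  unfolding hs_incl_def by simp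

context
  fixes \<Lambda> :: "'i set" and P :: "'i \<Rightarrow> 'a set" and le :: "'i \<Rightarrow> 'a \<Rightarrow> 'a \<Rightarrow> bool"
    and z t :: "'i \<Rightarrow> 'a"
  assumes summands_bounded: "\<forall>\<alpha>\<in>\<Lambda>. bounded_poset (P \<alpha>) (le \<alpha>) (z \<alpha>) (t \<alpha>)"
begin

lemma summand_bounded: "\<alpha> \<in> \<Lambda> \<Longrightarrow> bounded_poset_on (P \<alpha>) (le \<alpha>) (z \<alpha>) (t \<alpha>)"
  using summands_bounded by (simp add: bounded_poset_on_def)

lemma hs_incl_in: "\<beta> \<in> \<Lambda> \<Longrightarrow> x \<in> P \<beta> \<Longrightarrow> hs_incl \<beta> z t x \<in> hs_carrier \<Lambda> P z t"
  unfolding hs_incl_def by (simp add: HElem_in_hs_carrier_iff)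

lemma hs_incl_le_iff:
  assumes "\<beta> \<in> \<Lambda>" "x \<in> P \<beta>" "y \<in> P \<beta>"
  shows "hs_le le (hs_incl \<beta> z t x) (hs_incl \<beta> z t y) \<longleftrightarrow> le \<beta> x y"
proof -
  interpret bounded_poset_on "P \<beta>" "le \<beta>" "z \<beta>" "t \<beta>" using summand_bounded assms(1) .
  show ?thesis unfolding hs_incl_def using assms bot_le le_top le_bot_iff top_le_iff by auto
qed

lemma comparable_in_hs_incl_image:
  assumes "\<beta> \<in> \<Lambda>" "b \<in> P \<beta>" "b \<noteq> z \<beta>" "b \<noteq> t \<beta>" "w \<in> hs_carrier \<Lambda> P z t"
    and "hs_le le w (HElem \<beta> b) \<or> hs_le le (HElem \<beta> b) w"
  shows "w \<in> hs_incl \<beta> z t ` P \<beta>"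
proof -
  interpret bounded_poset_on "P \<beta>" "le \<beta>" "z \<beta>" "t \<beta>" using summand_bounded assms(1) .
  have "z \<beta> \<noteq> t \<beta>" using bot_ne_top assms(2-4) .
  then have "hs_incl \<beta> z t (z \<beta>) = HBot" "hs_incl \<beta> z t (t \<beta>) = HTop"
    unfolding hs_incl_def by simp_all
  then show ?thesis
    using assms(5,6) bot_in top_in by (cases w) (force simp: HElem_in_hs_carrier_iff)+
qed

lemma lower_hs_incl:
  assumes "\<beta> \<in> \<Lambda>" "M \<subseteq> P \<beta>" "b \<in> M" "b \<noteq> z \<beta>" "b \<noteq> t \<beta>"
  shows "lower (hs_carrier \<Lambda> P z t) (hs_le le) (hs_incl \<beta> z t ` M)
       = hs_incl \<beta> z t ` lower (P \<beta>) (le \<beta>) M"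
proof (rule lower_image_order_embedding[where m = b])
  show "hs_incl \<beta> z t ` P \<beta> \<subseteq> hs_carrier \<Lambda> P z t"
    using assms(1) hs_incl_in by blast
qed (use assms hs_incl_le_iff comparable_in_hs_incl_image in auto)

lemma upper_hs_incl:
  assumes "\<beta> \<in> \<Lambda>" "M \<subseteq> P \<beta>" "b \<in> M" "b \<noteq> z \<beta>" "b \<noteq> t \<beta>"
  shows "upper (hs_carrier \<Lambda> P z t) (hs_le le) (hs_incl \<beta> z t ` M)
       = hs_incl \<beta> z t ` upper (P \<beta>) (le \<beta>) M"
proof (rule upper_image_order_embedding[where m = b])
  show "hs_incl \<beta> z t ` P \<beta> \<subseteq> hs_carrier \<Lambda> P z t"
    using assms(1) hs_incl_in by blast
qed (use assms hs_incl_le_iff comparable_in_hs_incl_image in auto)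

lemma lower_pair_from_summand:
  assumes "x \<in> hs_carrier \<Lambda> P z t" "\<beta> \<in> \<Lambda>" "b \<in> P \<beta>" "b \<noteq> z \<beta>" "b \<noteq> t \<beta>"
  obtains x' where "x' \<in> P \<beta>"
    "lower (hs_carrier \<Lambda> P z t) (hs_le le) {x, HElem \<beta> b}
      = lower (hs_carrier \<Lambda> P z t) (hs_le le) {hs_incl \<beta> z t x', HElem \<beta> b}"
proof -
  interpret bounded_poset_on "P \<beta>" "le \<beta>" "z \<beta>" "t \<beta>" using summand_bounded assms(2) .
  have "z \<beta> \<noteq> t \<beta>" using bot_ne_top assms(3-5) .
  then have incl_bot: "hs_incl \<beta> z t (z \<beta>) = HBot" and incl_top: "hs_incl \<beta> z t (t \<beta>) = HTop"
    unfolding hs_incl_def by simp_all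
  show thesis
  proof (cases x)
    case HBot
    then show ?thesis using that[of "z \<beta>"] incl_bot bot_in by simp
  next
    case HTop
    then show ?thesis using that[of "t \<beta>"] incl_top top_in by simp
  next
    case (HElem \<gamma> a)
    show ?thesis
    proof (cases "\<gamma> = \<beta>")
      case True
      then show ?thesis
        using that[of a] HElem assms(1) by (simp add: HElem_in_hs_carrier_iff)
    next
      case False
      have "lower (hs_carrier \<Lambda> P z t) (hs_le le) {HBot, HElem \<beta> b} = {HBot}"
        unfolding lower_def by auto
      show ?thesis
      proof (rule that[of "z \<beta>"])
        show "lower (hs_carrier \<Lambda> P z t) (hs_le le) {x, HElem \<beta> b}
          = lower (hs_carrier \<Lambda> P z t) (hs_le le) {hs_incl \<beta> z t (z \<beta>), HElem \<beta> b}"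
          unfolding HElem incl_bot lower_HElem_distinct_summands[OF False] by (rule sym) fact
      qed (rule bot_in)
    qed
  qed
qed

lemma hs_le_refl: "x \<in> hs_carrier \<Lambda> P z t \<Longrightarrow> hs_le le x x"
  by (cases x) (simp_all add: HElem_in_hs_carrier_iff bounded_poset_on.reflexive[OF summand_bounded])

lemma hs_le_antisym:
  assumes "x \<in> hs_carrier \<Lambda> P z t" "y \<in> hs_carrier \<Lambda> P z t" "hs_le le x y" "hs_le le y x"
  shows "x = y"
proof (cases x; cases y)
  fix \<alpha> a \<beta> b
  assume "x = HElem \<alpha> a" "y = HElem \<beta> b"
  with assms have "\<alpha> \<in> \<Lambda>" "a \<in> P \<alpha>" "b \<in> P \<alpha>" "\<beta> = \<alpha>" "le \<alpha> a b" "le \<alpha> b a"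
    by (auto simp: HElem_in_hs_carrier_iff)
  with \<open>x = HElem \<alpha> a\<close> \<open>y = HElem \<beta> b\<close> show "x = y"
    using bounded_poset_on.antisymmetric[OF summand_bounded, of \<alpha> a b] by simp
qed (use assms in simp_all)

lemma hs_le_trans:
  assumes "x \<in> hs_carrier \<Lambda> P z t" "y \<in> hs_carrier \<Lambda> P z t" "w \<in> hs_carrier \<Lambda> P z t"
    and "hs_le le x y" "hs_le le y w"
  shows "hs_le le x w"
proof (cases x; cases y; cases w)
  fix \<alpha> a \<beta> b \<gamma> d
  assume "x = HElem \<alpha> a" "y = HElem \<beta> b" "w = HElem \<gamma> d"
  with assms have "\<alpha> \<in> \<Lambda>" "a \<in> P \<alpha>" "b \<in> P \<alpha>" "d \<in> P \<alpha>" "\<beta> = \<alpha>" "\<gamma> = \<alpha>"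
      "le \<alpha> a b" "le \<alpha> b d"
    by (auto simp: HElem_in_hs_carrier_iff)
  with \<open>x = HElem \<alpha> a\<close> \<open>w = HElem \<gamma> d\<close> show "hs_le le x w"
    using bounded_poset_on.transitive[OF summand_bounded, of \<alpha> a b d] by simp
qed (use assms in simp_all)

lemma bounded_poset_hs: "bounded_poset (hs_carrier \<Lambda> P z t) (hs_le le) HBot HTop"
  unfolding bounded_poset_def poset_on_def
  by (simp add: hs_le_refl, use hs_le_antisym hs_le_trans in blast)

end

context
  fixes \<Lambda> :: "'i set" and P :: "'i \<Rightarrow> 'a set" and le :: "'i \<Rightarrow> 'a \<Rightarrow> 'a \<Rightarrow> bool"
    and c :: "'i \<Rightarrow> 'a \<Rightarrow> 'a" and z t :: "'i \<Rightarrow> 'a"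
  assumes summands_complemented:
    "\<forall>\<alpha>\<in>\<Lambda>. poset_with_complementation (P \<alpha>) (le \<alpha>) (c \<alpha>) (z \<alpha>) (t \<alpha>)"
begin

lemma summand_complemented:
  "\<alpha> \<in> \<Lambda> \<Longrightarrow> poset_with_complementation_on (P \<alpha>) (le \<alpha>) (c \<alpha>) (z \<alpha>) (t \<alpha>)"
  using summands_complemented by (simp add: poset_with_complementation_on_def)

lemma summands_bounded_of_complemented: "\<forall>\<alpha>\<in>\<Lambda>. bounded_poset (P \<alpha>) (le \<alpha>) (z \<alpha>) (t \<alpha>)"
  using summands_complemented unfolding poset_with_complementation_def by blast

lemma HElem_in_hs_carrier_compl:
  assumes "HElem \<alpha> a \<in> hs_carrier \<Lambda> P z t"
  shows "HElem \<alpha> (c \<alpha> a) \<in> hs_carrier \<Lambda> P z t"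
proof -
  have a: "\<alpha> \<in> \<Lambda>" "a \<in> P \<alpha>" "a \<noteq> z \<alpha>" "a \<noteq> t \<alpha>"
    using assms by (simp_all add: HElem_in_hs_carrier_iff)
  interpret poset_with_complementation_on "P \<alpha>" "le \<alpha>" "c \<alpha>" "z \<alpha>" "t \<alpha>"
    using summand_complemented a(1) .
  show ?thesis using a compl_in compl_proper by (simp add: HElem_in_hs_carrier_iff)
qed

lemma hs_comp_in: "x \<in> hs_carrier \<Lambda> P z t \<Longrightarrow> hs_comp c x \<in> hs_carrier \<Lambda> P z t"
  by (cases x) (simp_all add: HElem_in_hs_carrier_compl)

lemma hs_comp_antitone:
  assumes "x \<in> hs_carrier \<Lambda> P z t" "y \<in> hs_carrier \<Lambda> P z t" "hs_le le x y"
  shows "hs_le le (hs_comp c y) (hs_comp c x)"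
proof (cases x; cases y)
  fix \<alpha> a \<beta> b
  assume "x = HElem \<alpha> a" "y = HElem \<beta> b"
  with assms have "\<alpha> \<in> \<Lambda>" "a \<in> P \<alpha>" "b \<in> P \<alpha>" "\<beta> = \<alpha>" "le \<alpha> a b"
    by (auto simp: HElem_in_hs_carrier_iff)
  with \<open>x = HElem \<alpha> a\<close> \<open>y = HElem \<beta> b\<close> show ?thesis
    using poset_with_complementation_on.compl_antitone[OF summand_complemented, of \<alpha> a b] by simp
qed (use assms in simp_all)

lemma hs_comp_hs_comp: "x \<in> hs_carrier \<Lambda> P z t \<Longrightarrow> hs_comp c (hs_comp c x) = x"
  by (cases x) (simp_all add: HElem_in_hs_carrier_iff
      poset_with_complementation_on.compl_compl[OF summand_complemented])

lemma hs_incl_compl: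
  assumes "HElem \<alpha> a \<in> hs_carrier \<Lambda> P z t"
  shows "hs_incl \<alpha> z t (c \<alpha> a) = hs_comp c (HElem \<alpha> a)"
  using HElem_in_hs_carrier_compl[OF assms] by (simp add: HElem_in_hs_carrier_iff)

lemma lower_upper_hs_compl:
  assumes "x \<in> hs_carrier \<Lambda> P z t"
  shows "lower (hs_carrier \<Lambda> P z t) (hs_le le) {x, hs_comp c x} = {HBot}
    \<and> upper (hs_carrier \<Lambda> P z t) (hs_le le) {x, hs_comp c x} = {HTop}"
proof (cases x)
  case (HElem \<alpha> a)
  then have a: "\<alpha> \<in> \<Lambda>" "a \<in> P \<alpha>" "a \<noteq> z \<alpha>" "a \<noteq> t \<alpha>"
    using assms by (simp_all add: HElem_in_hs_carrier_iff)
  interpret poset_with_complementation_on "P \<alpha>" "le \<alpha>" "c \<alpha>" "z \<alpha>" "t \<alpha>"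
    using summand_complemented a(1) .
  have pair: "{x, hs_comp c x} = hs_incl \<alpha> z t ` {a, c \<alpha> a}"
    using HElem a hs_incl_compl assms by simp
  have "{a, c \<alpha> a} \<subseteq> P \<alpha>" using a(2) compl_in by simp
  note transfer = lower_hs_incl[OF summands_bounded_of_complemented a(1) this _ a(3,4)]
    upper_hs_incl[OF summands_bounded_of_complemented a(1) this _ a(3,4)]
  have "z \<alpha> \<noteq> t \<alpha>" using bot_ne_top a(2-4) .
  then show ?thesis
    unfolding pair using transfer lower_compl[OF a(2)] upper_compl[OF a(2)]
    by (simp add: hs_incl_def)
qed (auto simp: lower_def upper_def)

lemma poset_with_complementation_hs:
  "poset_with_complementation (hs_carrier \<Lambda> P z t) (hs_le le) (hs_comp c) HBot HTop"
  unfolding poset_with_complementation_def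
  using bounded_poset_hs[OF summands_bounded_of_complemented] hs_comp_in hs_comp_antitone
    hs_comp_hs_comp lower_upper_hs_compl
  by blast

end

context
  fixes \<Lambda> :: "'i set" and P :: "'i \<Rightarrow> 'a set" and le :: "'i \<Rightarrow> 'a \<Rightarrow> 'a \<Rightarrow> bool"
    and c :: "'i \<Rightarrow> 'a \<Rightarrow> 'a" and z t :: "'i \<Rightarrow> 'a"
  assumes summands_pseudo_orthomodular:
    "\<forall>\<alpha>\<in>\<Lambda>. pseudo_orthomodular (P \<alpha>) (le \<alpha>) (c \<alpha>) (z \<alpha>) (t \<alpha>)"
begin

lemma summands_complemented_of_pseudo_orthomodular:
  "\<forall>\<alpha>\<in>\<Lambda>. poset_with_complementation (P \<alpha>) (le \<alpha>) (c \<alpha>) (z \<alpha>) (t \<alpha>)"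
  using summands_pseudo_orthomodular unfolding pseudo_orthomodular_def by blast

lemma summands_bounded_of_pseudo_orthomodular:
  "\<forall>\<alpha>\<in>\<Lambda>. bounded_poset (P \<alpha>) (le \<alpha>) (z \<alpha>) (t \<alpha>)"
  using summands_complemented_of_pseudo_orthomodular summands_bounded_of_complemented by blast

lemma pseudo_orthomodular_law_hs_HElem:
  assumes x: "x \<in> hs_carrier \<Lambda> P z t" and y: "HElem \<beta> b \<in> hs_carrier \<Lambda> P z t"
  shows "lower (hs_carrier \<Lambda> P z t) (hs_le le)
      (upper (hs_carrier \<Lambda> P z t) (hs_le le)
        (lower (hs_carrier \<Lambda> P z t) (hs_le le) {x, HElem \<beta> b} \<union> {hs_comp c (HElem \<beta> b)})
       \<union> {HElem \<beta> b})
    = lower (hs_carrier \<Lambda> P z t) (hs_le le) {x, HElem \<beta> b}"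
proof -
  have b: "\<beta> \<in> \<Lambda>" "b \<in> P \<beta>" "b \<noteq> z \<beta>" "b \<noteq> t \<beta>"
    using y by (simp_all add: HElem_in_hs_carrier_iff)
  note bounded = summands_bounded_of_pseudo_orthomodular
  interpret poset_with_complementation_on "P \<beta>" "le \<beta>" "c \<beta>" "z \<beta>" "t \<beta>"
    using summand_complemented[OF summands_complemented_of_pseudo_orthomodular b(1)] .
  have law: "\<And>u. u \<in> P \<beta> \<Longrightarrow> lower (P \<beta>) (le \<beta>)
      (upper (P \<beta>) (le \<beta>) (lower (P \<beta>) (le \<beta>) {u, b} \<union> {c \<beta> b}) \<union> {b})
      = lower (P \<beta>) (le \<beta>) {u, b}"
    using summands_pseudo_orthomodular b(1,2) unfolding pseudo_orthomodular_def by blast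
  have cb: "c \<beta> b \<in> P \<beta>" "c \<beta> b \<noteq> z \<beta>" "c \<beta> b \<noteq> t \<beta>"
    using compl_in compl_proper b(2-4) by simp_all
  obtain x' where x': "x' \<in> P \<beta>"
    "lower (hs_carrier \<Lambda> P z t) (hs_le le) {x, HElem \<beta> b}
      = lower (hs_carrier \<Lambda> P z t) (hs_le le) {hs_incl \<beta> z t x', HElem \<beta> b}"
    using lower_pair_from_summand[OF bounded x b] .
  define Lb where "Lb = lower (P \<beta>) (le \<beta>) {x', b}"
  define Ub where "Ub = upper (P \<beta>) (le \<beta>) (Lb \<union> {c \<beta> b})"
  have "lower (hs_carrier \<Lambda> P z t) (hs_le le) {x, HElem \<beta> b} = hs_incl \<beta> z t ` Lb"
    using x' b lower_hs_incl[OF bounded b(1), of "{x', b}" b] unfolding Lb_def by simp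
  moreover have "upper (hs_carrier \<Lambda> P z t) (hs_le le) (hs_incl \<beta> z t ` Lb \<union> {hs_comp c (HElem \<beta> b)})
      = hs_incl \<beta> z t ` Ub"
    using cb upper_hs_incl[OF bounded b(1), of "Lb \<union> {c \<beta> b}" "c \<beta> b"]
    unfolding Ub_def Lb_def lower_def by simp
  moreover have "lower (hs_carrier \<Lambda> P z t) (hs_le le) (hs_incl \<beta> z t ` Ub \<union> {HElem \<beta> b})
      = hs_incl \<beta> z t ` lower (P \<beta>) (le \<beta>) (Ub \<union> {b})"
    using b lower_hs_incl[OF bounded b(1), of "Ub \<union> {b}" b] unfolding Ub_def upper_def by simp
  moreover have "lower (P \<beta>) (le \<beta>) (Ub \<union> {b}) = Lb"
    using law[OF x'(1)] unfolding Ub_def Lb_def .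
  ultimately show ?thesis by simp
qed

lemma pseudo_orthomodular_law_hs:
  assumes x: "x \<in> hs_carrier \<Lambda> P z t" and y: "y \<in> hs_carrier \<Lambda> P z t"
  shows "lower (hs_carrier \<Lambda> P z t) (hs_le le)
      (upper (hs_carrier \<Lambda> P z t) (hs_le le) (lower (hs_carrier \<Lambda> P z t) (hs_le le) {x, y} \<union> {hs_comp c y})
       \<union> {y})
    = lower (hs_carrier \<Lambda> P z t) (hs_le le) {x, y}"
proof -
  interpret hs: poset_with_complementation_on "hs_carrier \<Lambda> P z t" "hs_le le" "hs_comp c" HBot HTop
    using poset_with_complementation_hs[OF summands_complemented_of_pseudo_orthomodular]
    by (simp add: poset_with_complementation_on_def)
  show ?thesis
    using x y hs.pseudo_orthomodular_law_bot hs.pseudo_orthomodular_law_top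
      pseudo_orthomodular_law_hs_HElem
    by (cases y) simp_all
qed

end

theorem proposition4:
  fixes \<Lambda> :: "'i set"
    and P :: "'i \<Rightarrow> 'a set"
    and le :: "'i \<Rightarrow> 'a \<Rightarrow> 'a \<Rightarrow> bool"
    and c :: "'i \<Rightarrow> 'a \<Rightarrow> 'a"
    and z t :: "'i \<Rightarrow> 'a"
  assumes "\<forall>\<alpha>\<in>\<Lambda>. pseudo_orthomodular (P \<alpha>) (le \<alpha>) (c \<alpha>) (z \<alpha>) (t \<alpha>)"
  shows "pseudo_orthomodular (hs_carrier \<Lambda> P z t) (hs_le le) (hs_comp c) HBot HTop"
  unfolding pseudo_orthomodular_def
  using poset_with_complementation_hs[OF summands_complemented_of_pseudo_orthomodular[OF assms]]
    pseudo_orthomodular_law_hs[OF assms]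
  by blast

end
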